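(* Let $n\geq 3$ and let $C_n^*$ be the complex described in the context. Let $D$ be an $S^3$-knotlike chain complex over $R$, and let $f\colon C_n^*\to D$ and $g\colon D\to C_n^*$ be $R$-linear chain maps. Then the image of $g f(\alpha_n^* )$ is a boundary in the complex $C_n^*\otimes_R\mathbb{F}[\mathcal{U}]/(\mathcal{U}^{n-1})$, where $\mathcal{V}$ acts on $\mathbb{F}[\mathcal{U}]/(\mathcal{U}^{n-1})$ as $1$.
   Context: Let $\mathbb{F}=\mathbb{Z}/2$ and $R=\mathbb{F}[\mathcal{U},\mathcal{V}]$. A chain complex $D$ over $R$ is $S^3$-knotlike if $H_*(D\otimes_R\mathbb{F}[\mathcal{U}])\cong\mathbb{F}[\mathcal{U}]$ as $\mathbb{F}[\mathcal{U}]$-modules, where $\mathcal{V}$ acts on $\mathbb{F}[\mathcal{U}]$ as $1$. For $n\geq 3$, $C_n^*$ is the free $R$-module with basis $\alpha^*_s$ ($1\leq s\leq 2n-1$); $\widetilde{\alpha}^*_s$ ($1\leq s\leq n-2$ and $n+1\leq s\leq 2n-2$); $b^{*,(s)}_{n-1}$ ($1\leq s\leq n-2$); $b^{*,(s)}_{n}$ ($1\leq s\leq 2n-2$); $b^{*,(s)}_{n+1}$ ($n+1\leq s\leq 2n-2$), with $R$-linear differential $\partial$ given by $\partial\alpha^*_s=0$, $\partial\widetilde{\alpha}^*_s=0$, and $\partial b^{*,(s)}_{n-1}=\mathcal{U}^{n(n-1)/2}\mathcal{V}^{n(n-1)/2}\alpha^*_s+\mathcal{V}^{n-s-1}\widetilde{\alpha}^*_s$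 for $1\leq s\leq n-2$; $\partial b^{*,(s)}_{n}=\mathcal{U}^{n(n+1)/2-s}\mathcal{V}^{n(n+1)/2}\alpha^*_{s+1}+\mathcal{U}^{n}\widetilde{\alpha}^*_s$ for $1\leq s\leq n-2$; $\partial b^{*,(s)}_{n}=\mathcal{U}^{n(n+1)/2}\mathcal{V}^{n(n-1)/2-n+s+1}\alpha^*_s+\mathcal{U}^{n(n+1)/2-s}\mathcal{V}^{n(n+1)/2}\alpha^*_{s+1}$ for $n-1\leq s\leq n$; $\partial b^{*,(s)}_{n}=\mathcal{U}^{n(n+1)/2}\mathcal{V}^{n(n-1)/2-n+s+1}\alpha^*_s+\mathcal{V}^{n}\widetilde{\alpha}^*_s$ for $n+1\leq s\leq 2n-2$; $\partial b^{*,(s)}_{n+1}=\mathcal{U}^{n(n-1)/2}\mathcal{V}^{n(n-1)/2}\alpha^*_{s+1}+\mathcal{U}^{s-n}\widetilde{\alpha}^*_s$ for $n+1\leq s\leq 2n-2$. *)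

theory Defs
  imports "HOL-Library.Z2" "HOL-Computational_Algebra.Polynomial"
begin

text \<open>The ground field F = Z/2 is the type bit.  R = F[U,V] is rendered as
  bit poly poly: the outer variable is V, the inner variable (coefficient ring F[U]) is U.\<close>

type_synonym R = "bit poly poly"

definition UU :: R where "UU = [:[:0, 1:]:]"
definition VV :: R where "VV = [:0, 1:]"

definition evV1 :: "R \<Rightarrow> bit poly" where "evV1 r = poly r 1"

text \<open>Generators of C_n^*: Al s = alpha_s, AlT s = alpha-tilde_s,
  Bm s = b_{n-1}^{(s)}, B0 s = b_n^{(s)}, Bp s = b_{n+1}^{(s)}.\<close>
datatype gen = Al nat | AlT nat | Bm nat | B0 nat | Bp nat

definition gens :: "nat \<Rightarrow> gen set" where
  "gens n = {Al s | s. 1 \<le> s \<and> s \<le> 2*n - 1}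
     \<union> {AlT s | s. (1 \<le> s \<and> s \<le> n - 2) \<or> (n + 1 \<le> s \<and> s \<le> 2*n - 2)}
     \<union> {Bm s | s. 1 \<le> s \<and> s \<le> n - 2}
     \<union> {B0 s | s. 1 \<le> s \<and> s \<le> 2*n - 2}
     \<union> {Bp s | s. n + 1 \<le> s \<and> s \<le> 2*n - 2}"

text \<open>bdC n g h = coefficient of the generator h in the differential of the generator g.\<close>
fun bdC :: "nat \<Rightarrow> gen \<Rightarrow> gen \<Rightarrow> R" where
  "bdC n (Al s) h = 0"
| "bdC n (AlT s) h = 0"
| "bdC n (Bm s) h =
     (if h = Al s then UU ^ (n*(n-1) div 2) * VV ^ (n*(n-1) div 2) else 0)
   + (if h = AlT s then VV ^ (n - s - 1) else 0)"
| "bdC n (B0 s) h =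
     (if s \<le> n - 2 then
        (if h = Al (s+1) then UU ^ (n*(n+1) div 2 - s) * VV ^ (n*(n+1) div 2) else 0)
      + (if h = AlT s then UU ^ n else 0)
      else if s \<le> n then
        (if h = Al s then UU ^ (n*(n+1) div 2) * VV ^ (n*(n-1) div 2 + s + 1 - n) else 0)
      + (if h = Al (s+1) then UU ^ (n*(n+1) div 2 - s) * VV ^ (n*(n+1) div 2) else 0)
      else
        (if h = Al s then UU ^ (n*(n+1) div 2) * VV ^ (n*(n-1) div 2 + s + 1 - n) else 0)
      + (if h = AlT s then VV ^ n else 0))"
| "bdC n (Bp s) h =
     (if h = Al (s+1) then UU ^ (n*(n-1) div 2) * VV ^ (n*(n-1) div 2) else 0)
   + (if h = AlT s then UU ^ (s - n) else 0)"

text \<open>A free finitely generated chain complex D over R with basis the finite type 'b: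
  dD b b' = coefficient of b' in the differential of b.\<close>
definition is_complex :: "('b::finite \<Rightarrow> 'b \<Rightarrow> R) \<Rightarrow> bool" where
  "is_complex dD \<longleftrightarrow> (\<forall>b b''. (\<Sum>b'\<in>UNIV. dD b b' * dD b' b'') = 0)"

text \<open>Differential of D \<otimes>_R F[U] (V acting as 1), on coefficient vectors.\<close>
definition dU :: "('b::finite \<Rightarrow> 'b \<Rightarrow> R) \<Rightarrow> ('b \<Rightarrow> bit poly) \<Rightarrow> ('b \<Rightarrow> bit poly)" where
  "dU dD x = (\<lambda>b'. \<Sum>b\<in>UNIV. x b * evV1 (dD b b'))"

definition cycU :: "('b::finite \<Rightarrow> 'b \<Rightarrow> R) \<Rightarrow> ('b \<Rightarrow> bit poly) \<Rightarrow> bool" where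
  "cycU dD x \<longleftrightarrow> dU dD x = (\<lambda>_. 0)"

definition bndU :: "('b::finite \<Rightarrow> 'b \<Rightarrow> R) \<Rightarrow> ('b \<Rightarrow> bit poly) \<Rightarrow> bool" where
  "bndU dD x \<longleftrightarrow> (\<exists>y. x = dU dD y)"

text \<open>S^3-knotlike: H_*(D \<otimes> F[U]) is isomorphic to F[U] as an F[U]-module, i.e. there is a
  cycle z such that p \<mapsto> [p z] is a bijection F[U] -> H_*(D \<otimes> F[U]).\<close>
definition knotlike :: "('b::finite \<Rightarrow> 'b \<Rightarrow> R) \<Rightarrow> bool" where
  "knotlike dD \<longleftrightarrow> (\<exists>z. cycU dD z
      \<and> (\<forall>x. cycU dD x \<longrightarrow> (\<exists>p. bndU dD (\<lambda>b. x b - p * z b)))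
      \<and> (\<forall>p. bndU dD (\<lambda>b. p * z b) \<longrightarrow> p = 0))"

text \<open>R-linear chain map f : C_n^* -> D, f(g) = sum_b F g b * b.\<close>
definition chain_map_CD :: "nat \<Rightarrow> ('b::finite \<Rightarrow> 'b \<Rightarrow> R) \<Rightarrow> (gen \<Rightarrow> 'b \<Rightarrow> R) \<Rightarrow> bool" where
  "chain_map_CD n dD F \<longleftrightarrow> (\<forall>g\<in>gens n. \<forall>b.
      (\<Sum>h\<in>gens n. bdC n g h * F h b) = (\<Sum>b'\<in>UNIV. F g b' * dD b' b))"

text \<open>R-linear chain map g : D -> C_n^*, g(b) = sum_h G b h * h (supported on gens n).\<close>
definition chain_map_DC :: "nat \<Rightarrow> ('b::finite \<Rightarrow> 'b \<Rightarrow> R) \<Rightarrow> ('b \<Rightarrow> gen \<Rightarrow> R) \<Rightarrow> bool" where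
  "chain_map_DC n dD G \<longleftrightarrow> (\<forall>b h. h \<notin> gens n \<longrightarrow> G b h = 0) \<and>
     (\<forall>b. \<forall>h\<in>gens n.
      (\<Sum>b'\<in>UNIV. dD b b' * G b' h) = (\<Sum>g\<in>gens n. G b g * bdC n g h))"

text \<open>x (an element of C_n^*) maps to a boundary in C_n^* \<otimes>_R F[U]/(U^{n-1}), V acting as 1.\<close>
definition boundary_mod :: "nat \<Rightarrow> (gen \<Rightarrow> R) \<Rightarrow> bool" where
  "boundary_mod n x \<longleftrightarrow> (\<exists>y :: gen \<Rightarrow> bit poly. \<forall>h\<in>gens n.
      [:0, 1:] ^ (n - 1) dvd ((\<Sum>g\<in>gens n. y g * evV1 (bdC n g h)) - evV1 (x h)))"

end

theory Submission
  imports Defs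
begin

text \<open>Write a_s for the image of f(alpha_s) in D \<otimes> F[U]. Each a_s is a cycle, so
  a_s = p_s z + d w_s, where z freely generates the homology F[U]. Applying f to the boundary
  of b_n^(n-1) shows that U^N a_(n-1) + U^(N-n+1) a_n is a boundary, N = n(n+1)/2; as z generates
  freely, U^N p_(n-1) + U^(N-n+1) p_n = 0, so U^(n-1) divides p_n. Hence
  g(a_n) = p_n g(z) + d g(w_n) is a boundary modulo U^(n-1).\<close>

lemma evV1_0 [simp]: "evV1 0 = 0"
  and evV1_add [simp]: "evV1 (a + b) = evV1 a + evV1 b"
  and evV1_mult [simp]: "evV1 (a * b) = evV1 a * evV1 b"
  and evV1_power [simp]: "evV1 (a ^ k) = evV1 a ^ k"
  and evV1_sum [simp]: "evV1 (sum f A) = (\<Sum>x\<in>A. evV1 (f x))"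
  and evV1_UU [simp]: "evV1 UU = [:0, 1:]"
  and evV1_VV [simp]: "evV1 VV = 1"
  by (simp_all add: evV1_def poly_sum UU_def VV_def)

lemma dU_add_scale: "dU dD (\<lambda>b. c * x b + d * y b) = (\<lambda>b. c * dU dD x b + d * dU dD y b)"
  by (rule ext) (simp add: dU_def algebra_simps sum.distrib sum_distrib_left)

lemma dU_diff: "dU dD (\<lambda>b. x b - y b) = (\<lambda>b. dU dD x b - dU dD y b)"
  by (rule ext) (simp add: dU_def algebra_simps sum_subtractf)

lemma finite_gens: "finite (gens n)"
proof (rule finite_subset)
  show "gens n \<subseteq> Al ` {..2*n} \<union> AlT ` {..2*n} \<union> Bm ` {..2*n} \<union> B0 ` {..2*n} \<union> Bp ` {..2*n}"
    unfolding gens_def by auto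
qed simp

text \<open>After V := 1: imageU F g is f(g) in D \<otimes> F[U], pushU G is g \<otimes> F[U], and dCU n is
  the differential of C_n^* \<otimes> F[U].\<close>

definition imageU :: "(gen \<Rightarrow> 'b \<Rightarrow> R) \<Rightarrow> gen \<Rightarrow> 'b \<Rightarrow> bit poly" where
  "imageU F g = (\<lambda>b. evV1 (F g b))"

definition pushU :: "('b::finite \<Rightarrow> gen \<Rightarrow> R) \<Rightarrow> ('b \<Rightarrow> bit poly) \<Rightarrow> gen \<Rightarrow> bit poly" where
  "pushU G w = (\<lambda>h. \<Sum>b\<in>UNIV. w b * evV1 (G b h))"

definition dCU :: "nat \<Rightarrow> (gen \<Rightarrow> bit poly) \<Rightarrow> gen \<Rightarrow> bit poly" where
  "dCU n y = (\<lambda>h. \<Sum>g\<in>gens n. y g * evV1 (bdC n g h))"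

lemma evV1_composite: "evV1 (\<Sum>b\<in>UNIV. F g b * G b h) = pushU G (imageU F g) h"
  by (simp add: pushU_def imageU_def)

lemma dU_imageU:
  assumes "chain_map_CD n dD F" and "g \<in> gens n"
  shows "dU dD (imageU F g) b = (\<Sum>h\<in>gens n. evV1 (bdC n g h) * imageU F h b)"
proof -
  have "(\<Sum>h\<in>gens n. bdC n g h * F h b) = (\<Sum>b'\<in>UNIV. F g b' * dD b' b)"
    using assms unfolding chain_map_CD_def by blast
  then have "evV1 (\<Sum>h\<in>gens n. bdC n g h * F h b) = evV1 (\<Sum>b'\<in>UNIV. F g b' * dD b' b)"
    by (rule arg_cong)
  then show ?thesis by (simp add: dU_def imageU_def)
qed

lemma cycU_imageU_Al:
  assumes "chain_map_CD n dD F" and "Al s \<in> gens n"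
  shows "cycU dD (imageU F (Al s))"
  using dU_imageU[OF assms] by (simp add: cycU_def fun_eq_iff)

lemma pushU_dU:
  assumes "chain_map_DC n dD G" and "h \<in> gens n"
  shows "pushU G (dU dD w) h = dCU n (pushU G w) h"
proof -
  have "pushU G (dU dD w) h = (\<Sum>b\<in>UNIV. \<Sum>b'\<in>UNIV. w b' * evV1 (dD b' b * G b h))"
    by (simp add: pushU_def dU_def sum_distrib_right mult.assoc)
  also have "\<dots> = (\<Sum>b'\<in>UNIV. w b' * evV1 (\<Sum>b\<in>UNIV. dD b' b * G b h))"
    by (subst sum.swap) (simp add: sum_distrib_left)
  also have "\<dots> = (\<Sum>b'\<in>UNIV. w b' * evV1 (\<Sum>g\<in>gens n. G b' g * bdC n g h))"
    using assms unfolding chain_map_DC_def by simp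
  also have "\<dots> = dCU n (pushU G w) h"
    unfolding dCU_def pushU_def
    by (simp add: sum_distrib_left sum_distrib_right mult.assoc sum.swap[of _ "gens n" UNIV])
  finally show ?thesis .
qed

lemma bdC_B0_pred:
  assumes "n \<ge> 2"
  shows "bdC n (B0 (n-1)) h =
    (if h = Al (n-1) then UU ^ (n*(n+1) div 2) * VV ^ (n*(n-1) div 2) else 0)
    + (if h = Al n then UU ^ (n*(n+1) div 2 - (n-1)) * VV ^ (n*(n+1) div 2) else 0)"
proof -
  have "\<not> n-1 \<le> n-2" "n-1 \<le> n" "n-1+1 = n" "n*(n-1) div 2 + (n-1) + 1 - n = n*(n-1) div 2"
    using assms by auto
  then show ?thesis by (simp only: bdC.simps if_False if_True)
qed

lemma dU_imageU_B0_pred: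
  assumes "n \<ge> 2" and "chain_map_CD n dD F"
  shows "dU dD (imageU F (B0 (n-1))) b =
    [:0, 1:] ^ (n*(n+1) div 2) * imageU F (Al (n-1)) b
    + [:0, 1:] ^ (n*(n+1) div 2 - (n-1)) * imageU F (Al n) b"
proof -
  have gens: "B0 (n-1) \<in> gens n" "Al (n-1) \<in> gens n" "Al n \<in> gens n"
    using assms(1) unfolding gens_def by auto
  have "dU dD (imageU F (B0 (n-1))) b =
    (\<Sum>h\<in>gens n. (if h = Al (n-1) then [:0, 1:] ^ (n*(n+1) div 2) * imageU F h b else 0)
      + (if h = Al n then [:0, 1:] ^ (n*(n+1) div 2 - (n-1)) * imageU F h b else 0))"
    unfolding dU_imageU[OF assms(2) gens(1)] bdC_B0_pred[OF assms(1)]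
    using assms(1) by (intro sum.cong) (auto simp del: evV1_sum)
  also have "\<dots> = [:0, 1:] ^ (n*(n+1) div 2) * imageU F (Al (n-1)) b
    + [:0, 1:] ^ (n*(n+1) div 2 - (n-1)) * imageU F (Al n) b"
    by (simp only: sum.distrib sum.delta[OF finite_gens] gens if_True)
  finally show ?thesis .
qed

lemma cycle_decomposition:
  assumes "\<forall>x. cycU dD x \<longrightarrow> (\<exists>p. bndU dD (\<lambda>b. x b - p * z b))" and "cycU dD x"
  obtains p w where "\<And>b. x b = p * z b + dU dD w b"
proof -
  obtain p w where "(\<lambda>b. x b - p * z b) = dU dD w"
    using assms unfolding bndU_def by blast
  then have "\<And>b. x b = p * z b + dU dD w b"
    by (metis add.commute diff_add_cancel)
  then show ?thesis by (rule that)
qed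

lemma coefficient_relation:
  assumes free: "\<forall>p. bndU dD (\<lambda>b. p * z b) \<longrightarrow> p = 0"
    and x: "\<And>b. x b = p * z b + dU dD w b"
    and x': "\<And>b. x' b = p' * z b + dU dD w' b"
    and rel: "\<And>b. c * x b + c' * x' b = dU dD y b"
  shows "c * p + c' * p' = 0"
proof -
  have "\<And>b. (c * p + c' * p') * z b = dU dD y b - (c * dU dD w b + c' * dU dD w' b)"
    using rel x x' by (simp add: algebra_simps)
  then have "(\<lambda>b. (c * p + c' * p') * z b) = dU dD (\<lambda>b. y b - (c * w b + c' * w' b))"
    by (simp add: dU_diff dU_add_scale)
  then show ?thesis
    using free unfolding bndU_def by blast
qed

lemma power_dvd_of_combination_eq_0:
  fixes x :: "'a::idom"
  assumes "x ^ (k + m) * p + x ^ k * q = 0" and "x \<noteq> 0"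
  shows "x ^ m dvd q"
proof -
  have "x ^ k * (x ^ m * p + q) = 0"
    using assms(1) by (simp add: algebra_simps power_add)
  then have "q = - (x ^ m * p)"
    using assms(2) by (simp add: eq_neg_iff_add_eq_0 add.commute)
  then show ?thesis by simp
qed

lemma boundary_mod_of_decomposition:
  assumes "chain_map_DC n dD G"
    and x: "\<And>h. evV1 (x h) = pushU G a h"
    and a: "\<And>b. a b = p * z b + dU dD w b"
    and "[:0, 1:] ^ (n - 1) dvd p"
  shows "boundary_mod n x"
  unfolding boundary_mod_def
proof (intro exI ballI)
  fix h assume h: "h \<in> gens n"
  have "evV1 (x h) = p * pushU G z h + pushU G (dU dD w) h"
    unfolding x pushU_def a by (simp add: distrib_right sum.distrib sum_distrib_left mult.assoc)
  also have "\<dots> = p * pushU G z h + dCU n (pushU G w) h"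
    using pushU_dU[OF assms(1) h] by simp
  finally have "dCU n (pushU G w) h - evV1 (x h) = - (p * pushU G z h)"
    by simp
  with assms(4) show "[:0, 1:] ^ (n - 1) dvd
      (\<Sum>g\<in>gens n. pushU G w g * evV1 (bdC n g h)) - evV1 (x h)"
    unfolding dCU_def by simp
qed

theorem lemma2p11:
  fixes n :: nat and dD :: "'b::finite \<Rightarrow> 'b \<Rightarrow> R"
    and F :: "gen \<Rightarrow> 'b \<Rightarrow> R" and G :: "'b \<Rightarrow> gen \<Rightarrow> R"
  assumes "n \<ge> 3"
    and "is_complex dD"
    and "knotlike dD"
    and "chain_map_CD n dD F"
    and "chain_map_DC n dD G"
  shows "boundary_mod n (\<lambda>h. \<Sum>b\<in>UNIV. F (Al n) b * G b h)"
proof -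
  define N where "N = n*(n+1) div 2"
  obtain z where decomp: "\<forall>x. cycU dD x \<longrightarrow> (\<exists>p. bndU dD (\<lambda>b. x b - p * z b))"
    and free: "\<forall>p. bndU dD (\<lambda>b. p * z b) \<longrightarrow> p = 0"
    using assms(3) unfolding knotlike_def by blast
  have "Al (n-1) \<in> gens n" "Al n \<in> gens n"
    using assms(1) unfolding gens_def by auto
  then obtain p1 w1 p2 w2
    where a1: "\<And>b. imageU F (Al (n-1)) b = p1 * z b + dU dD w1 b"
      and a2: "\<And>b. imageU F (Al n) b = p2 * z b + dU dD w2 b"
    using cycle_decomposition[OF decomp] cycU_imageU_Al[OF assms(4)] by metis
  have "[:0, 1:] ^ N * p1 + [:0, 1:] ^ (N - (n-1)) * p2 = 0"
    using coefficient_relation[OF free a1 a2 dU_imageU_B0_pred[symmetric]] assms(1,4)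
    unfolding N_def by simp
  moreover have "N = (N - (n-1)) + (n-1)"
  proof -
    have "2 * (n-1) \<le> n * (n+1)" by (cases n) auto
    then show ?thesis unfolding N_def by linarith
  qed
  ultimately have "[:0, 1:] ^ ((N - (n-1)) + (n-1)) * p1 + [:0, 1:] ^ (N - (n-1)) * p2 = 0"
    by metis
  then have "[:0, 1:] ^ (n-1) dvd p2"
    by (rule power_dvd_of_combination_eq_0) simp
  then show ?thesis
    using boundary_mod_of_decomposition[OF assms(5) evV1_composite a2] by blast
qed

end
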